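(* Let $m\geq\beta\geq 1$ be integers and let $G^*$ be a graph with maximum $q$ among all graphs in $\mathfrak{G}_{m,\geq\beta}$. Let $X^*$ be a principal eigenvector of $Q(G^* )$ with coordinates $x^*_v$, let $M^*(G^* )$ be a matching of $G^*$ extremal to $X^*$, and let $u_1v_1,u_2v_2,\ldots,u_kv_k$ ($k=\beta(G^* )$) be an ordering of $M^*(G^* )$ proper to $X^*$. Suppose $\beta(G^* )\geq 2$ and let $i,j\in\{1,\ldots,k\}$ with $i<j$. Then $x^*_{u_i}\geq x^*_{v_j}$ if and only if the subgraph of $G^*$ induced by $\{u_i,v_i,u_j,v_j\}$ is either two disjoint edges ($2K_2$) or a complete graph $K_4$.
   Context: All graphs are finite, simple and undirected (isolated vertices allowed). $Q(G)=D(G)+A(G)$ is the signless Laplacian matrix and $q(G)$ its largest eigenvalue; a principal eigenvector of $Q(G)$ is a nonnegative unit vector $X$ with $Q(G)X=q(G)X$. $\beta(G)$ is the matching number. $\mathfrak{G}_{m,\geq\beta}$ is the set of graphs with exactly $m$ edges and matching number at least $\beta$. For a graph $G$ with at least one edge and a principal eigenvector $X$ (coordinates $x_v$), a matching $M^*(G)$ is extremal to $X$ if it is a maximum matching and $\sum_{uv\in M^*(G)}(x_u+x_v)^2=\max_M\sum_{uv\in M}(x_u+x_v)^2$ over all maximum matchings $M$. An ordering $u_1v_1,\ldots,u_kv_k$ of the edges of $M^*(G^* )$ (with a designated labelling of the endpoints of each edge) is proper to $X^*$ if for each $i$: (i) $x^*_{v_i}\geq x^*_{u_i}$; (ii) $x^*_{v_i}\geq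 x^*_{v_{i+1}}$ (for $i<k$); (iii) $x^*_{u_i}\geq x^*_{u_{i+1}}$ whenever $x^*_{v_i}=x^*_{v_{i+1}}$ (for $i<k$). *)

theory Defs
  imports Complex_Main
begin

definition graph :: "'a set \<Rightarrow> 'a set set \<Rightarrow> bool" where
  "graph V E \<longleftrightarrow> finite V \<and> (\<forall>e\<in>E. e \<subseteq> V \<and> card e = 2)"

definition degree :: "'a set set \<Rightarrow> 'a \<Rightarrow> nat" where
  "degree E v = card {e\<in>E. v \<in> e}"

definition neighbours :: "'a set set \<Rightarrow> 'a \<Rightarrow> 'a set" where
  "neighbours E v = {w. {v, w} \<in> E}"

text \<open>Action of the signless Laplacian Q(G) = D(G) + A(G) on a vector X (indexed by V).\<close>
definition Qmul :: "'a set set \<Rightarrow> ('a \<Rightarrow> real) \<Rightarrow> 'a \<Rightarrow> real" where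
  "Qmul E X v = real (degree E v) * X v + (\<Sum>w\<in>neighbours E v. X w)"

definition is_Q_eigvec :: "'a set \<Rightarrow> 'a set set \<Rightarrow> real \<Rightarrow> ('a \<Rightarrow> real) \<Rightarrow> bool" where
  "is_Q_eigvec V E lam X \<longleftrightarrow> (\<forall>v. v \<notin> V \<longrightarrow> X v = 0) \<and> (\<exists>v\<in>V. X v \<noteq> 0)
      \<and> (\<forall>v\<in>V. Qmul E X v = lam * X v)"

definition Q_eigenvalues :: "'a set \<Rightarrow> 'a set set \<Rightarrow> real set" where
  "Q_eigenvalues V E = {lam. \<exists>X. is_Q_eigvec V E lam X}"

definition qQ :: "'a set \<Rightarrow> 'a set set \<Rightarrow> real" where
  "qQ V E = Max (Q_eigenvalues V E)"

definition principal_eigvec :: "'a set \<Rightarrow> 'a set set \<Rightarrow> ('a \<Rightarrow> real) \<Rightarrow> bool" where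
  "principal_eigvec V E X \<longleftrightarrow> is_Q_eigvec V E (qQ V E) X \<and> (\<forall>v\<in>V. X v \<ge> 0)
      \<and> (\<Sum>v\<in>V. (X v)\<^sup>2) = 1"

definition matching :: "'a set set \<Rightarrow> 'a set set \<Rightarrow> bool" where
  "matching E M \<longleftrightarrow> M \<subseteq> E \<and> (\<forall>e1\<in>M. \<forall>e2\<in>M. e1 \<noteq> e2 \<longrightarrow> e1 \<inter> e2 = {})"

definition matching_number :: "'a set set \<Rightarrow> nat" where
  "matching_number E = Max {card M | M. matching E M}"

definition maximum_matching :: "'a set set \<Rightarrow> 'a set set \<Rightarrow> bool" where
  "maximum_matching E M \<longleftrightarrow> matching E M \<and> card M = matching_number E"

definition match_weight :: "('a \<Rightarrow> real) \<Rightarrow> 'a set set \<Rightarrow> real" where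
  "match_weight X M = (\<Sum>e\<in>M. (\<Sum>w\<in>e. X w)\<^sup>2)"

definition extremal_matching :: "'a set set \<Rightarrow> ('a \<Rightarrow> real) \<Rightarrow> 'a set set \<Rightarrow> bool" where
  "extremal_matching E X M \<longleftrightarrow> maximum_matching E M
      \<and> (\<forall>M'. maximum_matching E M' \<longrightarrow> match_weight X M' \<le> match_weight X M)"

definition proper_ordering ::
  "'a set set \<Rightarrow> ('a \<Rightarrow> real) \<Rightarrow> nat \<Rightarrow> (nat \<Rightarrow> 'a) \<Rightarrow> (nat \<Rightarrow> 'a) \<Rightarrow> bool" where
  "proper_ordering M X k u v \<longleftrightarrow>
     k = card M \<and> M = {{u i, v i} | i. i \<in> {1..k}} \<and>
     (\<forall>i\<in>{1..k}. X (v i) \<ge> X (u i)) \<and>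
     (\<forall>i\<in>{1..<k}. X (v i) \<ge> X (v (Suc i))) \<and>
     (\<forall>i\<in>{1..<k}. X (v i) = X (v (Suc i)) \<longrightarrow> X (u i) \<ge> X (u (Suc i)))"

text \<open>Since q is
invariant under isomorphism, competitors range over graphs on the vertex type nat
(every finite graph is isomorphic to one of these).\<close>
definition in_family :: "nat \<Rightarrow> nat \<Rightarrow> 'a set \<Rightarrow> 'a set set \<Rightarrow> bool" where
  "in_family m \<beta> V E \<longleftrightarrow> graph V E \<and> card E = m \<and> matching_number E \<ge> \<beta>"

definition q_extremal :: "nat \<Rightarrow> nat \<Rightarrow> 'a set \<Rightarrow> 'a set set \<Rightarrow> bool" where
  "q_extremal m \<beta> V E \<longleftrightarrow> in_family m \<beta> V E \<and>
     (\<forall>(V' :: nat set) E'. in_family m \<beta> V' E' \<longrightarrow> qQ V' E' \<le> qQ V E)"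

definition induced_edges :: "'a set set \<Rightarrow> 'a set \<Rightarrow> 'a set set" where
  "induced_edges E S = {e\<in>E. e \<subseteq> S}"

definition induced_is_2K2 :: "'a set set \<Rightarrow> 'a set \<Rightarrow> bool" where
  "induced_is_2K2 E S \<longleftrightarrow> card S = 4 \<and>
     (\<exists>e1 e2. induced_edges E S = {e1, e2} \<and> e1 \<noteq> e2 \<and> e1 \<inter> e2 = {})"

definition induced_is_K4 :: "'a set set \<Rightarrow> 'a set \<Rightarrow> bool" where
  "induced_is_K4 E S \<longleftrightarrow> card S = 4 \<and> induced_edges E S = {e. e \<subseteq> S \<and> card e = 2}"

end

theory Submission
  imports Defs "HOL-Analysis.Analysis"
begin

text \<open>
  A principal eigenvector X of Q(G*) maximises the Rayleigh quotient, so
  \<open>X\<^sup>T Q(G') X \<le> q(G*)\<close> for every graph G' of the family on the vertex set of G*, and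
  equality forces X to be an eigenvector of Q(G') for q(G*) as well.  Write
  \<open>a = x\<^sub>v\<^sub>i \<ge> b = x\<^sub>u\<^sub>i\<close> and \<open>c = x\<^sub>v\<^sub>j \<ge> d = x\<^sub>u\<^sub>j\<close>, so that (c, d) is
  lexicographically at most (a, b).  Replacing the edges \<open>v\<^sub>iu\<^sub>i, v\<^sub>ju\<^sub>j\<close> by
  \<open>v\<^sub>iv\<^sub>j, u\<^sub>iu\<^sub>j\<close> changes both \<open>X\<^sup>T Q X\<close> and the weight of a matching by
  \<open>2(a - d)(c - b)\<close>.  Hence if c > b the induced subgraph is neither \<open>2K\<^sub>2\<close> (the rotated
  graph would beat G*) nor \<open>K\<^sub>4\<close> (the rotated matching would beat M*).  If b \<ge> c, moving
  an edge onto a non-edge that is at least as heavy keeps the graph in the family, so equality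
  holds, and the eigen-equation at a new endpoint forces the new edge to have weight 0; as
  edges outside M* have positive weight, the four cross pairs are all edges or all non-edges.
\<close>

section \<open>The quadratic form of the signless Laplacian\<close>

definition edge_sum :: "('a \<Rightarrow> real) \<Rightarrow> 'a set \<Rightarrow> real" where
  "edge_sum X e = (\<Sum>w\<in>e. X w)"

text \<open>\<open>Q_form E X\<close> is \<open>X\<^sup>T Q(G) X\<close>: Q(G) is the sum of \<open>(e\<^sub>u + e\<^sub>v)(e\<^sub>u + e\<^sub>v)\<^sup>T\<close> over the edges uv.\<close>
definition Q_form :: "'a set set \<Rightarrow> ('a \<Rightarrow> real) \<Rightarrow> real" where
  "Q_form E X = (\<Sum>e\<in>E. (edge_sum X e)\<^sup>2)"

definition sq_norm :: "'a set \<Rightarrow> ('a \<Rightarrow> real) \<Rightarrow> real" where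
  "sq_norm V X = (\<Sum>v\<in>V. (X v)\<^sup>2)"

lemma graph_finite_vertices: "graph V E \<Longrightarrow> finite V"
  unfolding graph_def by blast

lemma graph_finite_edges: "graph V E \<Longrightarrow> finite E"
  unfolding graph_def by (meson finite_Pow_iff finite_subset PowI subsetI)

lemma graph_edge_subset: "graph V E \<Longrightarrow> e \<in> E \<Longrightarrow> e \<subseteq> V"
  unfolding graph_def by blast

lemma graph_finite_edge: "graph V E \<Longrightarrow> e \<in> E \<Longrightarrow> finite e"
  unfolding graph_def by (meson finite_subset)

lemma graph_edgeE:
  assumes "graph V E" "e \<in> E"
  obtains x y where "x \<noteq> y" "e = {x, y}"
  using assms unfolding graph_def by (metis card_2_iff)

lemma edge_sum_doubleton [simp]: "x \<noteq> y \<Longrightarrow> edge_sum X {x, y} = X x + X y"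
  by (simp add: edge_sum_def)

lemma match_weight_eq_Q_form: "match_weight X M = Q_form M X"
  unfolding match_weight_def Q_form_def edge_sum_def ..

lemma Qmul_eq_sum_incident:
  assumes g: "graph V E"
  shows "Qmul E X v = (\<Sum>e\<in>{e\<in>E. v \<in> e}. edge_sum X e)"
proof -
  let ?I = "{e\<in>E. v \<in> e}"
  have bij: "bij_betw (\<lambda>w. {v, w}) (neighbours E v) ?I"
  proof (rule bij_betwI')
    fix x y show "({v, x} = {v, y}) = (x = y)" by (metis doubleton_eq_iff)
  next
    fix x assume "x \<in> neighbours E v" then show "{v, x} \<in> ?I" by (auto simp: neighbours_def)
  next
    fix e assume e: "e \<in> ?I"
    then obtain x y where "e = {x, y}" using graph_edgeE[OF g] by blast
    then show "\<exists>w\<in>neighbours E v. e = {v, w}"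
      using e by (auto simp: neighbours_def insert_commute)
  qed
  have loop_free: "v \<notin> neighbours E v"
    using g unfolding neighbours_def graph_def by force
  have "(\<Sum>e\<in>?I. edge_sum X e) = (\<Sum>w\<in>neighbours E v. edge_sum X {v, w})"
    using sum.reindex_bij_betw[OF bij, of "edge_sum X"] by simp
  also have "\<dots> = (\<Sum>w\<in>neighbours E v. X v + X w)"
    using loop_free by (intro sum.cong refl edge_sum_doubleton) blast
  also have "\<dots> = real (card (neighbours E v)) * X v + (\<Sum>w\<in>neighbours E v. X w)"
    by (simp add: sum.distrib)
  also have "card (neighbours E v) = Defs.degree E v"
    unfolding Defs.degree_def using bij_betw_same_card[OF bij] .
  finally show ?thesis unfolding Qmul_def by simp
qed

lemma sum_mult_Qmul:
  assumes g: "graph V E"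
  shows "(\<Sum>v\<in>V. Y v * Qmul E Z v) = (\<Sum>e\<in>E. edge_sum Y e * edge_sum Z e)"
proof -
  have fV: "finite V" using graph_finite_vertices[OF g] .
  have "(\<Sum>v\<in>V. Y v * Qmul E Z v) = (\<Sum>v\<in>V. \<Sum>e\<in>{e\<in>E. v \<in> e}. Y v * edge_sum Z e)"
    by (simp add: Qmul_eq_sum_incident[OF g] sum_distrib_left)
  also have "\<dots> = (\<Sum>e\<in>E. \<Sum>v\<in>{v\<in>V. v \<in> e}. Y v * edge_sum Z e)"
    by (rule sum.swap_restrict[OF fV graph_finite_edges[OF g]])
  also have "\<dots> = (\<Sum>e\<in>E. \<Sum>v\<in>e. Y v * edge_sum Z e)"
    using graph_edge_subset[OF g] by (intro sum.cong refl arg_cong2[where f = sum]) auto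
  also have "\<dots> = (\<Sum>e\<in>E. edge_sum Y e * edge_sum Z e)"
    unfolding edge_sum_def by (simp add: sum_distrib_right)
  finally show ?thesis .
qed

lemma Q_form_eq_sum_mult_Qmul: "graph V E \<Longrightarrow> Q_form E X = (\<Sum>v\<in>V. X v * Qmul E X v)"
  unfolding Q_form_def by (simp add: sum_mult_Qmul power2_eq_square)

lemma Q_form_cong:
  assumes "graph V E" and "\<And>w. w \<in> V \<Longrightarrow> Y w = Y' w"
  shows "Q_form E Y = Q_form E Y'"
  unfolding Q_form_def edge_sum_def
proof (intro sum.cong refl arg_cong[where f = "\<lambda>x. x\<^sup>2"])
  fix e w assume "e \<in> E" "w \<in> e"
  then show "Y w = Y' w" using assms graph_edge_subset by blast
qed

lemma Q_form_scale: "Q_form E (\<lambda>w. c * Y w) = c\<^sup>2 * Q_form E Y"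
  by (simp add: Q_form_def edge_sum_def power_mult_distrib sum_distrib_left[symmetric])

lemma sq_norm_scale: "sq_norm V (\<lambda>w. c * Y w) = c\<^sup>2 * sq_norm V Y"
  by (simp add: sq_norm_def power_mult_distrib sum_distrib_left)

lemma sq_norm_nonneg: "sq_norm V Y \<ge> 0"
  unfolding sq_norm_def by (simp add: sum_nonneg)

lemma sq_norm_eq_0_iff: "finite V \<Longrightarrow> sq_norm V Y = 0 \<longleftrightarrow> (\<forall>v\<in>V. Y v = 0)"
  unfolding sq_norm_def by (simp add: sum_nonneg_eq_0_iff)

lemma sq_norm_normalize:
  assumes "sq_norm V Y > 0"
  shows "sq_norm V (\<lambda>w. 1 / sqrt (sq_norm V Y) * Y w) = 1"
proof -
  have "sq_norm V (\<lambda>w. 1 / sqrt (sq_norm V Y) * Y w) = (1 / sqrt (sq_norm V Y))\<^sup>2 * sq_norm V Y"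
    by (rule sq_norm_scale)
  also have "\<dots> = 1" using assms by (simp add: power_divide)
  finally show ?thesis .
qed

lemma edge_sum_update:
  assumes "finite e"
  shows "edge_sum (X(v := X v + t)) e = edge_sum X e + (if v \<in> e then t else 0)"
proof -
  have "edge_sum (X(v := X v + t)) e = (\<Sum>w\<in>e. X w + (if w = v then t else 0))"
    unfolding edge_sum_def by (intro sum.cong) auto
  then show ?thesis using assms by (simp add: sum.distrib edge_sum_def)
qed

lemma Q_form_update:
  assumes g: "graph V E"
  shows "Q_form E (X(v := X v + t)) = Q_form E X + 2 * t * Qmul E X v + t\<^sup>2 * Defs.degree E v"
proof -
  have fE: "finite E" using graph_finite_edges[OF g] .
  have "Q_form E (X(v := X v + t)) = (\<Sum>e\<in>E. (edge_sum X e)\<^sup>2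
          + 2 * t * (if v \<in> e then edge_sum X e else 0) + t\<^sup>2 * (if v \<in> e then 1 else 0))"
    unfolding Q_form_def
  proof (intro sum.cong refl)
    fix e assume "e \<in> E"
    then have "finite e" using graph_finite_edge[OF g] by blast
    then show "(edge_sum (X(v := X v + t)) e)\<^sup>2 = (edge_sum X e)\<^sup>2
        + 2 * t * (if v \<in> e then edge_sum X e else 0) + t\<^sup>2 * (if v \<in> e then 1 else 0)"
      by (simp only: edge_sum_update) (simp add: power2_eq_square algebra_simps)
  qed
  also have "\<dots> = Q_form E X + 2 * t * (\<Sum>e\<in>E. if v \<in> e then edge_sum X e else 0)
      + t\<^sup>2 * (\<Sum>e\<in>E. if v \<in> e then 1 else 0)"
    unfolding Q_form_def by (simp add: sum.distrib sum_distrib_left)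
  also have "(\<Sum>e\<in>E. if v \<in> e then edge_sum X e else 0) = Qmul E X v"
    using sum.inter_filter[OF fE, of "edge_sum X"] by (simp add: Qmul_eq_sum_incident[OF g])
  also have "(\<Sum>e\<in>E. if v \<in> e then 1 else 0 :: real) = Defs.degree E v"
    using sum.inter_filter[OF fE, of "\<lambda>_. 1 :: real"] by (simp add: Defs.degree_def)
  finally show ?thesis .
qed

lemma sq_norm_update:
  assumes "finite V" "v \<in> V"
  shows "sq_norm V (X(v := X v + t)) = sq_norm V X + 2 * t * X v + t\<^sup>2"
proof -
  have "sq_norm V (X(v := X v + t)) = (\<Sum>w\<in>V. (X w)\<^sup>2 + (if w = v then 2 * t * X v + t\<^sup>2 else 0))"
    unfolding sq_norm_def by (intro sum.cong) (auto simp: power2_eq_square algebra_simps)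
  then show ?thesis using assms by (simp add: sum.distrib sq_norm_def)
qed

lemma linear_coeff_eq_0_if_quadratic_nonpos:
  fixes a c :: real
  assumes nonpos: "\<And>t. 2 * t * c + t\<^sup>2 * a \<le> 0"
  shows "c = 0"
proof (rule ccontr)
  assume "c \<noteq> 0"
  define K where "K = \<bar>a\<bar> + 1"
  have "K > 0" "2 * K + a > 0" unfolding K_def by (auto simp: abs_if)
  then have "0 < c\<^sup>2 / K\<^sup>2 * (2 * K + a)" using \<open>c \<noteq> 0\<close> by simp
  also have "\<dots> = 2 * (c / K) * c + (c / K)\<^sup>2 * a"
    using \<open>K > 0\<close> by (simp add: field_simps power2_eq_square)
  finally show False using nonpos[of "c / K"] by linarith
qed

text \<open>X maximises the Rayleigh quotient, so its derivative in every coordinate direction vanishes.\<close>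
lemma Rayleigh_maximiser_eigen:
  assumes g: "graph V E" and v: "v \<in> V"
    and bound: "\<And>Z. Q_form E Z \<le> L * sq_norm V Z" and eq: "Q_form E X = L * sq_norm V X"
  shows "Qmul E X v = L * X v"
proof -
  have "finite V" using graph_finite_vertices[OF g] .
  have "2 * t * (Qmul E X v - L * X v) + t\<^sup>2 * (Defs.degree E v - L) \<le> 0" for t
    using bound[of "X(v := X v + t)"] eq
    unfolding Q_form_update[OF g] sq_norm_update[OF \<open>finite V\<close> v] by (simp add: algebra_simps)
  then show ?thesis using linear_coeff_eq_0_if_quadratic_nonpos by fastforce
qed

section \<open>The Rayleigh principle for q(G)\<close>

lemma Q_form_eigvec: "graph V E \<Longrightarrow> is_Q_eigvec V E \<mu> Y \<Longrightarrow> Q_form E Y = \<mu> * sq_norm V Y"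
  by (simp add: Q_form_eq_sum_mult_Qmul is_Q_eigvec_def sq_norm_def sum_distrib_left
      power2_eq_square algebra_simps)

lemma sq_norm_eigvec_pos: "finite V \<Longrightarrow> is_Q_eigvec V E \<mu> Y \<Longrightarrow> sq_norm V Y > 0"
  using sq_norm_eq_0_iff sq_norm_nonneg unfolding is_Q_eigvec_def by (metis order_less_le)

lemma Qmul_scale: "Qmul E (\<lambda>w. c * Y w) v = c * Qmul E Y v"
  unfolding Qmul_def by (simp add: sum_distrib_left algebra_simps)

lemma eigvec_scale: "is_Q_eigvec V E \<mu> Y \<Longrightarrow> c \<noteq> 0 \<Longrightarrow> is_Q_eigvec V E \<mu> (\<lambda>w. c * Y w)"
  by (simp add: is_Q_eigvec_def Qmul_scale)

lemma eigvecs_orthogonal: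
  assumes g: "graph V E" and Y: "is_Q_eigvec V E \<mu> Y" and Z: "is_Q_eigvec V E \<nu> Z"
    and "\<mu> \<noteq> \<nu>"
  shows "(\<Sum>v\<in>V. Y v * Z v) = 0"
proof -
  have "\<nu> * (\<Sum>v\<in>V. Y v * Z v) = (\<Sum>v\<in>V. Y v * Qmul E Z v)"
    using Z by (simp add: is_Q_eigvec_def sum_distrib_left algebra_simps)
  also have "\<dots> = (\<Sum>v\<in>V. Z v * Qmul E Y v)"
    by (simp add: sum_mult_Qmul[OF g] mult.commute)
  also have "\<dots> = \<mu> * (\<Sum>v\<in>V. Y v * Z v)"
    using Y by (simp add: is_Q_eigvec_def sum_distrib_left algebra_simps)
  finally show ?thesis using \<open>\<mu> \<noteq> \<nu>\<close> by simp
qed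

text \<open>Bessel's inequality for the unit vector at w.\<close>
lemma orthonormal_family_sq_coord_sum_le_1:
  fixes Y :: "'i \<Rightarrow> 'a \<Rightarrow> real"
  assumes fV: "finite V" and fG: "finite G" and w: "w \<in> V"
    and orthonormal: "\<And>i j. i \<in> G \<Longrightarrow> j \<in> G \<Longrightarrow> (\<Sum>x\<in>V. Y i x * Y j x) = of_bool (i = j)"
  shows "(\<Sum>i\<in>G. (Y i w)\<^sup>2) \<le> 1"
proof -
  define S where "S x = (\<Sum>i\<in>G. Y i w * Y i x)" for x
  define \<delta> where "\<delta> x = (of_bool (x = w) :: real)" for x
  have "(\<Sum>x\<in>V. S x * S x) = (\<Sum>i\<in>G. \<Sum>j\<in>G. Y i w * Y j w * (\<Sum>x\<in>V. Y i x * Y j x))"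
    unfolding S_def
    by (simp add: sum_product sum_distrib_left sum.swap[of _ V] algebra_simps)
  also have "\<dots> = (\<Sum>i\<in>G. \<Sum>j\<in>G. if i = j then Y i w * Y j w else 0)"
    using orthonormal by (intro sum.cong refl) auto
  also have "\<dots> = (\<Sum>i\<in>G. (Y i w)\<^sup>2)"
    using fG by (simp add: power2_eq_square)
  finally have SS: "(\<Sum>x\<in>V. S x * S x) = (\<Sum>i\<in>G. (Y i w)\<^sup>2)" .
  have \<delta>S: "(\<Sum>x\<in>V. \<delta> x * S x) = S w" and \<delta>\<delta>: "(\<Sum>x\<in>V. (\<delta> x)\<^sup>2) = 1"
    using fV w by (simp_all add: \<delta>_def of_bool_def if_distrib[of "\<lambda>y. y * _"]
        if_distrib[of "\<lambda>y. y\<^sup>2"] cong: if_cong)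
  have "0 \<le> (\<Sum>x\<in>V. (\<delta> x - S x)\<^sup>2)" by (simp add: sum_nonneg)
  also have "\<dots> = (\<Sum>x\<in>V. (\<delta> x)\<^sup>2) - 2 * (\<Sum>x\<in>V. \<delta> x * S x) + (\<Sum>x\<in>V. S x * S x)"
    by (simp add: power2_eq_square algebra_simps sum.distrib sum_subtractf sum_distrib_left)
  finally show ?thesis using SS \<delta>S \<delta>\<delta> by (simp add: S_def power2_eq_square)
qed

lemma card_orthonormal_family_le:
  fixes Y :: "'i \<Rightarrow> 'a \<Rightarrow> real"
  assumes fV: "finite V" and fG: "finite G"
    and orthonormal: "\<And>i j. i \<in> G \<Longrightarrow> j \<in> G \<Longrightarrow> (\<Sum>x\<in>V. Y i x * Y j x) = of_bool (i = j)"
  shows "card G \<le> card V"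
proof -
  have "real (card G) = (\<Sum>i\<in>G. \<Sum>x\<in>V. (Y i x)\<^sup>2)"
    using orthonormal by (simp add: power2_eq_square)
  also have "\<dots> = (\<Sum>x\<in>V. \<Sum>i\<in>G. (Y i x)\<^sup>2)" by (rule sum.swap)
  also have "\<dots> \<le> (\<Sum>x\<in>V. 1)"
    using orthonormal_family_sq_coord_sum_le_1[OF fV fG _ orthonormal] by (intro sum_mono) auto
  finally show ?thesis by simp
qed

lemma finite_Q_eigenvalues:
  assumes g: "graph V E"
  shows "finite (Q_eigenvalues V E)"
proof -
  have fV: "finite V" using graph_finite_vertices[OF g] .
  have "\<exists>Y. is_Q_eigvec V E \<mu> Y \<and> sq_norm V Y = 1" if \<mu>: "\<mu> \<in> Q_eigenvalues V E" for \<mu>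
  proof -
    obtain Y where Y: "is_Q_eigvec V E \<mu> Y" using \<mu> unfolding Q_eigenvalues_def by blast
    have pos: "sq_norm V Y > 0" using sq_norm_eigvec_pos[OF fV Y] .
    show ?thesis
      using eigvec_scale[OF Y, of "1 / sqrt (sq_norm V Y)"] sq_norm_normalize[OF pos] pos by auto
  qed
  then obtain Y where Y: "\<And>\<mu>. \<mu> \<in> Q_eigenvalues V E \<Longrightarrow> is_Q_eigvec V E \<mu> (Y \<mu>) \<and> sq_norm V (Y \<mu>) = 1"
    by metis
  have "card G \<le> card V" if G: "G \<subseteq> Q_eigenvalues V E" "finite G" for G
  proof (rule card_orthonormal_family_le[OF fV G(2)])
    fix \<mu> \<nu> assume "\<mu> \<in> G" "\<nu> \<in> G"
    then have "is_Q_eigvec V E \<mu> (Y \<mu>)" "is_Q_eigvec V E \<nu> (Y \<nu>)" "sq_norm V (Y \<mu>) = 1"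
      using Y G(1) by auto
    then show "(\<Sum>x\<in>V. Y \<mu> x * Y \<nu> x) = of_bool (\<mu> = \<nu>)"
      using eigvecs_orthogonal[OF g] by (cases "\<mu> = \<nu>") (auto simp: sq_norm_def power2_eq_square)
  qed
  then show ?thesis using finite_if_finite_subsets_card_bdd by blast
qed

lemma continuous_map_Q_form:
  assumes g: "graph V E"
  shows "continuous_map (product_topology (\<lambda>_. euclideanreal) V) euclideanreal (Q_form E)"
  unfolding Q_form_def edge_sum_def power2_eq_square
  using graph_finite_edge[OF g] graph_edge_subset[OF g]
  by (intro continuous_map_sum continuous_map_real_mult continuous_map_product_projection
      graph_finite_edges[OF g]) auto

lemma continuous_map_sq_norm:
  assumes "finite V"
  shows "continuous_map (product_topology (\<lambda>_. euclideanreal) V) euclideanreal (sq_norm V)"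
  unfolding sq_norm_def power2_eq_square
  using assms by (intro continuous_map_sum continuous_map_real_mult continuous_map_product_projection)

lemma Q_form_max_on_unit_sphere:
  assumes g: "graph V E" and ne: "V \<noteq> {}"
  obtains Z where "sq_norm V Z = 1" "\<And>Y. sq_norm V Y = 1 \<Longrightarrow> Q_form E Y \<le> Q_form E Z"
proof -
  have fV: "finite V" using graph_finite_vertices[OF g] .
  let ?T = "product_topology (\<lambda>_. euclideanreal) V"
  let ?K = "{Z \<in> topspace ?T. sq_norm V Z \<in> {1}} \<inter> (\<Pi>\<^sub>E v\<in>V. {-1..1::real})"
  have "closedin ?T {Z \<in> topspace ?T. sq_norm V Z \<in> {1}}"
    by (rule closedin_continuous_map_preimage[OF continuous_map_sq_norm[OF fV]]) simp
  then have "compactin ?T ?K" by (rule closed_Int_compactin) (simp add: compactin_PiE)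
  then have compact: "compact (Q_form E ` ?K)"
    using image_compactin[OF _ continuous_map_Q_form[OF g]] by simp
  have restrict_in_K: "restrict Y V \<in> ?K" if "sq_norm V Y = 1" for Y
  proof -
    have "\<bar>Y v\<bar> \<le> 1" if "v \<in> V" for v
      using member_le_sum[of v V "\<lambda>v. (Y v)\<^sup>2"] \<open>sq_norm V Y = 1\<close> fV that
      by (simp add: sq_norm_def abs_square_le_1)
    then show ?thesis using that by (auto simp: sq_norm_def abs_le_iff)
  qed
  obtain v0 where "v0 \<in> V" using ne by blast
  then have "sq_norm V (\<lambda>v. of_bool (v = v0)) = 1"
    using fV by (simp add: sq_norm_def of_bool_def if_distrib[of "\<lambda>y. y\<^sup>2"] cong: if_cong)
  then have "Q_form E ` ?K \<noteq> {}" using restrict_in_K by blast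
  then obtain Z where Z: "Z \<in> ?K" and max: "\<And>Y. Y \<in> ?K \<Longrightarrow> Q_form E Y \<le> Q_form E Z"
    using compact_attains_sup[OF compact] by auto
  show thesis
  proof
    show "sq_norm V Z = 1" using Z by simp
    fix Y assume "sq_norm V Y = 1"
    then show "Q_form E Y \<le> Q_form E Z"
      using max[OF restrict_in_K] Q_form_cong[OF g, of Y "restrict Y V"] by simp
  qed
qed

lemma Q_form_maximiser:
  assumes g: "graph V E" and ne: "V \<noteq> {}"
  obtains Z where "\<forall>w. w \<notin> V \<longrightarrow> Z w = 0" "sq_norm V Z = 1"
    "\<And>Y. Q_form E Y \<le> Q_form E Z * sq_norm V Y"
proof -
  have fV: "finite V" using graph_finite_vertices[OF g] .
  obtain Z0 where Z0: "sq_norm V Z0 = 1" and max: "\<And>Y. sq_norm V Y = 1 \<Longrightarrow> Q_form E Y \<le> Q_form E Z0"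
    using Q_form_max_on_unit_sphere[OF g ne] by blast
  define Z where "Z w = (if w \<in> V then Z0 w else 0)" for w
  have same: "Q_form E Z = Q_form E Z0" "sq_norm V Z = 1"
    using Z0 by (simp_all add: Q_form_cong[OF g, of Z Z0] Z_def sq_norm_def)
  have bound: "Q_form E Y \<le> Q_form E Z * sq_norm V Y" for Y
  proof (cases "sq_norm V Y = 0")
    case True
    then have "Q_form E Y = Q_form E (\<lambda>w. 0)"
      by (intro Q_form_cong[OF g]) (simp add: sq_norm_eq_0_iff[OF fV])
    then show ?thesis using True by (simp add: Q_form_def edge_sum_def)
  next
    case False
    define c where "c = 1 / sqrt (sq_norm V Y)"
    have pos: "sq_norm V Y > 0" using False sq_norm_nonneg order_less_le by metis
    have "c\<^sup>2 * Q_form E Y = Q_form E (\<lambda>w. c * Y w)" by (rule Q_form_scale[symmetric])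
    also have "\<dots> \<le> Q_form E Z" using max[OF sq_norm_normalize[OF pos]] same by (simp only: c_def)
    finally have "c\<^sup>2 * Q_form E Y \<le> Q_form E Z" .
    then show ?thesis using pos by (simp add: c_def power_divide field_simps)
  qed
  show thesis by (rule that[OF _ same(2) bound]) (simp add: Z_def)
qed

lemma Q_form_le_qQ:
  assumes g: "graph V E" and ne: "V \<noteq> {}"
  shows "Q_form E Y \<le> qQ V E * sq_norm V Y"
proof -
  have fV: "finite V" using graph_finite_vertices[OF g] .
  obtain Z where Z0: "\<forall>w. w \<notin> V \<longrightarrow> Z w = 0" and Z1: "sq_norm V Z = 1"
    and bound: "\<And>Y. Q_form E Y \<le> Q_form E Z * sq_norm V Y"
    using Q_form_maximiser[OF g ne] by blast
  define L where "L = Q_form E Z"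
  have "\<exists>v\<in>V. Z v \<noteq> 0" using Z1 sq_norm_eq_0_iff[OF fV, of Z] by auto
  moreover have "Qmul E Z v = L * Z v" if "v \<in> V" for v
    using Rayleigh_maximiser_eigen[OF g that] bound Z1 by (simp add: L_def)
  ultimately have "is_Q_eigvec V E L Z" using Z0 unfolding is_Q_eigvec_def by blast
  then have L: "L \<in> Q_eigenvalues V E" unfolding Q_eigenvalues_def by blast
  have "\<mu> \<le> L" if \<mu>: "\<mu> \<in> Q_eigenvalues V E" for \<mu>
  proof -
    obtain W where W: "is_Q_eigvec V E \<mu> W" using \<mu> unfolding Q_eigenvalues_def by blast
    have "\<mu> * sq_norm V W \<le> L * sq_norm V W" using Q_form_eigvec[OF g W] bound[of W] L_def by simp
    then show ?thesis using sq_norm_eigvec_pos[OF fV W] by simp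
  qed
  then have "qQ V E = L" unfolding qQ_def using L finite_Q_eigenvalues[OF g] by (intro Max_eqI) auto
  then show ?thesis using bound L_def by simp
qed

section \<open>Matchings and moving edges\<close>

lemma finite_matching_cards: "finite E \<Longrightarrow> finite {card M | M. matching E M}"
  by (rule finite_subset[of _ "{..card E}"]) (auto simp: matching_def intro: card_mono)

lemma card_le_matching_number: "finite E \<Longrightarrow> matching E M \<Longrightarrow> card M \<le> matching_number E"
  unfolding matching_number_def by (rule Max_ge[OF finite_matching_cards]) auto

lemma maximum_matching_exists:
  assumes "finite E"
  obtains M where "maximum_matching E M"
proof -
  have "matching E {}" by (simp add: matching_def)
  then have "matching_number E \<in> {card M | M. matching E M}"
    unfolding matching_number_def using finite_matching_cards[OF assms] by (intro Max_in) auto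
  then show thesis using that unfolding maximum_matching_def by auto
qed

lemma matching_disjoint: "matching E M \<Longrightarrow> e1 \<in> M \<Longrightarrow> e2 \<in> M \<Longrightarrow> e1 \<noteq> e2 \<Longrightarrow> e1 \<inter> e2 = {}"
  unfolding matching_def by simp

lemma matching_mono: "matching F M \<Longrightarrow> M \<subseteq> F' \<Longrightarrow> matching F' M"
  unfolding matching_def by blast

lemma matching_doubleton_not_in:
  "matching E M \<Longrightarrow> e \<in> M \<Longrightarrow> x \<in> e \<Longrightarrow> y \<notin> e \<Longrightarrow> {x, y} \<notin> M"
  using matching_disjoint by fastforce

lemma card_replace_edge:
  assumes "finite F" "e \<in> F" "f \<notin> F"
  shows "card (insert f (F - {e})) = card F"
proof -
  have "card F > 0" using assms card_gt_0_iff by blast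
  then show ?thesis using assms by (simp add: card_Suc_Diff1)
qed

lemma Q_form_replace_edge:
  assumes "finite F" "e \<in> F" "f \<notin> F"
  shows "Q_form (insert f (F - {e})) X = Q_form F X - (edge_sum X e)\<^sup>2 + (edge_sum X f)\<^sup>2"
  using assms unfolding Q_form_def by (simp add: sum_diff1)

lemma Qmul_replace_edge:
  assumes g: "graph V F" and g': "graph V (insert f (F - {e}))"
    and "f \<notin> F" "w \<in> f" "w \<notin> e"
  shows "Qmul (insert f (F - {e})) X w = Qmul F X w + edge_sum X f"
proof -
  have "{e' \<in> insert f (F - {e}). w \<in> e'} = insert f {e' \<in> F. w \<in> e'}" using assms by auto
  moreover have "f \<notin> {e' \<in> F. w \<in> e'}" using assms by blast
  ultimately show ?thesis
    unfolding Qmul_eq_sum_incident[OF g] Qmul_eq_sum_incident[OF g']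
    using graph_finite_edges[OF g] by simp
qed

definition rotate_edges :: "'a set set \<Rightarrow> 'a \<Rightarrow> 'a \<Rightarrow> 'a \<Rightarrow> 'a \<Rightarrow> 'a set set" where
  "rotate_edges F A B C D = insert {A, C} (insert {B, D} (F - {{A, B}, {C, D}}))"

lemma sum_rotate_edges:
  fixes g :: "'a set \<Rightarrow> 'b :: ab_group_add"
  assumes "finite F" "{A, B} \<in> F" "{C, D} \<in> F" "{A, C} \<notin> F" "{B, D} \<notin> F"
    and "distinct [A, B, C, D]"
  shows "sum g (rotate_edges F A B C D) = sum g F - g {A, B} - g {C, D} + g {A, C} + g {B, D}"
proof -
  have "sum g F = sum g (F - {{A, B}, {C, D}}) + sum g {{A, B}, {C, D}}"
    using assms by (intro sum.subset_diff) auto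
  moreover have "sum g {{A, B}, {C, D}} = g {A, B} + g {C, D}"
    using assms(6) by (simp add: doubleton_eq_iff)
  moreover have "{A, C} \<noteq> {B, D}" using assms(6) by (auto simp: doubleton_eq_iff)
  ultimately show ?thesis using assms(1,4,5) by (simp add: rotate_edges_def algebra_simps)
qed

lemma card_rotate_edges:
  assumes "finite F" "{A, B} \<in> F" "{C, D} \<in> F" "{A, C} \<notin> F" "{B, D} \<notin> F"
    and "distinct [A, B, C, D]"
  shows "card (rotate_edges F A B C D) = card F"
  using sum_rotate_edges[OF assms, of "\<lambda>_. 1 :: int"] by simp

lemma Q_form_rotate_edges:
  assumes "finite F" "{A, B} \<in> F" "{C, D} \<in> F" "{A, C} \<notin> F" "{B, D} \<notin> F"
    and "distinct [A, B, C, D]"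
  shows "Q_form (rotate_edges F A B C D) X = Q_form F X + 2 * (X A - X D) * (X C - X B)"
proof -
  have "Q_form (rotate_edges F A B C D) X
      = Q_form F X - (X A + X B)\<^sup>2 - (X C + X D)\<^sup>2 + (X A + X C)\<^sup>2 + (X B + X D)\<^sup>2"
    using sum_rotate_edges[OF assms, of "\<lambda>e. (edge_sum X e)\<^sup>2"] assms(6) unfolding Q_form_def by simp
  then show ?thesis by (simp add: power2_eq_square algebra_simps)
qed

lemma graph_rotate_edges:
  "graph V F \<Longrightarrow> {A, B, C, D} \<subseteq> V \<Longrightarrow> distinct [A, B, C, D] \<Longrightarrow> graph V (rotate_edges F A B C D)"
  unfolding graph_def rotate_edges_def by auto

lemma matching_rotate_edges:
  assumes M: "matching F M" and "{A, B} \<in> M" "{C, D} \<in> M" and dist: "distinct [A, B, C, D]"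
    and "rotate_edges M A B C D \<subseteq> F'"
  shows "matching F' (rotate_edges M A B C D)"
  unfolding matching_def
proof (intro conjI ballI impI)
  show "rotate_edges M A B C D \<subseteq> F'" by fact
  define N where "N = {{A, C}, {B, D}}"
  define R where "R = M - {{A, B}, {C, D}}"
  have away: "e \<inter> n = {}" if "e \<in> R" "n \<in> N" for e n
  proof -
    have "e \<inter> {A, B} = {}" "e \<inter> {C, D} = {}"
      using M assms(2,3) \<open>e \<in> R\<close> unfolding matching_def R_def by auto
    then show ?thesis using \<open>n \<in> N\<close> unfolding N_def by blast
  qed
  fix e1 e2 assume e: "e1 \<in> rotate_edges M A B C D" "e2 \<in> rotate_edges M A B C D" "e1 \<noteq> e2"
  moreover have "rotate_edges M A B C D = N \<union> R" unfolding rotate_edges_def N_def R_def by blast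
  ultimately consider "e1 \<in> N" "e2 \<in> N" | "e1 \<in> N" "e2 \<in> R" | "e1 \<in> R" "e2 \<in> N" | "e1 \<in> R" "e2 \<in> R"
    by blast
  then show "e1 \<inter> e2 = {}"
  proof cases
    case 1
    then show ?thesis using e(3) dist unfolding N_def by auto
  next
    case 2
    then show ?thesis using away by blast
  next
    case 3
    then show ?thesis using away by blast
  next
    case 4
    then show ?thesis using matching_disjoint[OF M] e(3) unfolding R_def by blast
  qed
qed

section \<open>Relabelling vertices\<close>

lemma graph_image:
  assumes inj: "inj_on f V" and g: "graph V E"
  shows "graph (f ` V) ((`) f ` E)"
  using g card_image[OF inj_on_subset[OF inj]] unfolding graph_def by auto

lemma Q_form_image:
  assumes inj: "inj_on f V" and g: "graph V E"
  shows "Q_form ((`) f ` E) Y = Q_form E (Y \<circ> f)"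
proof -
  have injE: "inj_on ((`) f) E"
    using inj_on_subset[OF inj_on_image_Pow[OF inj]] graph_edge_subset[OF g] by blast
  have "edge_sum Y (f ` e) = edge_sum (Y \<circ> f) e" if "e \<in> E" for e
    unfolding edge_sum_def
    using sum.reindex[OF inj_on_subset[OF inj graph_edge_subset[OF g that]]] by simp
  then show ?thesis unfolding Q_form_def sum.reindex[OF injE] by simp
qed

lemma sq_norm_image: "inj_on f V \<Longrightarrow> sq_norm (f ` V) Y = sq_norm V (Y \<circ> f)"
  by (simp add: sq_norm_def sum.reindex)

lemma matching_image:
  assumes inj: "inj_on f V" and EV: "E \<subseteq> Pow V" and M: "matching E M"
  shows "matching ((`) f ` E) ((`) f ` M)"
  unfolding matching_def
proof (intro conjI ballI impI)
  show "(`) f ` M \<subseteq> (`) f ` E" using M unfolding matching_def by blast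
  fix e1 e2 assume "e1 \<in> (`) f ` M" "e2 \<in> (`) f ` M" "e1 \<noteq> e2"
  then obtain d1 d2 where d: "d1 \<in> M" "d2 \<in> M" "e1 = f ` d1" "e2 = f ` d2" "d1 \<noteq> d2"
    by auto
  have "d1 \<inter> d2 = {}" using M d unfolding matching_def by blast
  moreover have "d1 \<subseteq> V" "d2 \<subseteq> V" using M EV d(1,2) unfolding matching_def by auto
  ultimately show "e1 \<inter> e2 = {}" using inj_on_image_Int[OF inj, of d1 d2] d(3,4) by simp
qed

lemma in_family_image:
  assumes inj: "inj_on f V" and fam: "in_family m \<beta> V E"
  shows "in_family m \<beta> (f ` V) ((`) f ` E)"
proof -
  have g: "graph V E" using fam unfolding in_family_def by blast
  have EV: "E \<subseteq> Pow V" using graph_edge_subset[OF g] by blast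
  have injE: "inj_on ((`) f) E" using inj_on_subset[OF inj_on_image_Pow[OF inj] EV] .
  obtain M where M: "maximum_matching E M" using maximum_matching_exists graph_finite_edges[OF g] by blast
  then have "M \<subseteq> E" unfolding maximum_matching_def matching_def by blast
  then have "card ((`) f ` M) = matching_number E"
    using M card_image[OF inj_on_subset[OF injE]] unfolding maximum_matching_def by metis
  moreover have "card ((`) f ` M) \<le> matching_number ((`) f ` E)"
    using M matching_image[OF inj EV] graph_finite_edges[OF g]
    by (intro card_le_matching_number) (auto simp: maximum_matching_def)
  ultimately show ?thesis
    using fam graph_image[OF inj g] card_image[OF injE] unfolding in_family_def by auto
qed

text \<open>Competitors in \<open>q_extremal\<close> live on \<open>nat\<close>; relabelling makes the Rayleigh bound
  available for every member of the family, whatever its vertex type.\<close>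
lemma q_extremal_Q_form_le:
  fixes V :: "'a set" and V0 :: "'b set"
  assumes ext: "q_extremal m \<beta> V0 E0" and fam: "in_family m \<beta> V E" and ne: "V \<noteq> {}"
  shows "Q_form E Z \<le> qQ V0 E0 * sq_norm V Z"
proof -
  have g: "graph V E" using fam unfolding in_family_def by blast
  obtain f :: "'a \<Rightarrow> nat" where inj: "inj_on f V"
    using finite_imp_inj_to_nat_seg g unfolding graph_def by metis
  let ?Y = "Z \<circ> inv_into V f"
  have same: "Z (inv_into V f (f w)) = Z w" if "w \<in> V" for w using inv_into_f_f[OF inj that] by simp
  have "Q_form E Z = Q_form E (?Y \<circ> f)" using same by (intro Q_form_cong[OF g]) simp
  also have "\<dots> = Q_form ((`) f ` E) ?Y" using Q_form_image[OF inj g] by simp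
  also have "\<dots> \<le> qQ (f ` V) ((`) f ` E) * sq_norm (f ` V) ?Y"
    using Q_form_le_qQ graph_image[OF inj g] ne by blast
  also have "\<dots> \<le> qQ V0 E0 * sq_norm (f ` V) ?Y"
    using ext in_family_image[OF inj fam] sq_norm_nonneg
    unfolding q_extremal_def by (intro mult_right_mono) auto
  also have "sq_norm (f ` V) ?Y = sq_norm V Z"
    using sq_norm_image[OF inj, of ?Y] same by (simp add: sq_norm_def)
  finally show ?thesis .
qed

lemma doubleton_subset_four:
  assumes "e \<subseteq> {A, B, C, D}" "card e = 2"
  shows "e \<in> {{A, B}, {C, D}} \<union> {{A, C}, {A, D}, {B, C}, {B, D}}"
proof -
  obtain x y where xy: "x \<noteq> y" "e = {x, y}" using assms(2) by (metis card_2_iff)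
  then have "x = A \<or> x = B \<or> x = C \<or> x = D" "y = A \<or> y = B \<or> y = C \<or> y = D" using assms(1) by auto
  then show ?thesis using xy by (elim disjE) (simp_all add: insert_commute)
qed

lemma induced_edges_four:
  assumes g: "graph V E"
  shows "induced_edges E {A, B, C, D}
    = {e \<in> {{A, B}, {C, D}} \<union> {{A, C}, {A, D}, {B, C}, {B, D}}. e \<in> E}"
proof (intro equalityI subsetI)
  fix e assume "e \<in> induced_edges E {A, B, C, D}"
  then have "e \<in> E" "e \<subseteq> {A, B, C, D}" "card e = 2" using g unfolding induced_edges_def graph_def by auto
  then show "e \<in> {e \<in> {{A, B}, {C, D}} \<union> {{A, C}, {A, D}, {B, C}, {B, D}}. e \<in> E}"
    using doubleton_subset_four[of e A B C D] by (intro CollectI conjI)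
next
  fix e assume "e \<in> {e \<in> {{A, B}, {C, D}} \<union> {{A, C}, {A, D}, {B, C}, {B, D}}. e \<in> E}"
  then show "e \<in> induced_edges E {A, B, C, D}" unfolding induced_edges_def by blast
qed

lemma induced_is_2K2_iff:
  assumes g: "graph V E" and dist: "distinct [A, B, C, D]" and "{A, B} \<in> E" "{C, D} \<in> E"
  shows "induced_is_2K2 E {A, B, C, D} \<longleftrightarrow>
           {A, C} \<notin> E \<and> {A, D} \<notin> E \<and> {B, C} \<notin> E \<and> {B, D} \<notin> E"
proof -
  let ?S = "{A, B, C, D}"
  have own: "{A, B} \<in> induced_edges E ?S" "{C, D} \<in> induced_edges E ?S"
    using assms(3,4) unfolding induced_edges_def by auto
  have ne: "{A, B} \<noteq> {C, D}" "{A, B} \<inter> {C, D} = {}" using dist by (auto simp: doubleton_eq_iff)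
  have "induced_is_2K2 E ?S \<longleftrightarrow> induced_edges E ?S \<subseteq> {{A, B}, {C, D}}"
  proof
    assume "induced_is_2K2 E ?S"
    then obtain e1 e2 where "induced_edges E ?S = {e1, e2}" unfolding induced_is_2K2_def by blast
    moreover have "\<And>x y a b :: 'a set. a \<in> {x, y} \<Longrightarrow> b \<in> {x, y} \<Longrightarrow> a \<noteq> b \<Longrightarrow> {x, y} \<subseteq> {a, b}"
      by blast
    ultimately show "induced_edges E ?S \<subseteq> {{A, B}, {C, D}}" using own ne by metis
  next
    assume "induced_edges E ?S \<subseteq> {{A, B}, {C, D}}"
    then have "induced_edges E ?S = {{A, B}, {C, D}}" using own by blast
    then show "induced_is_2K2 E ?S" using ne dist unfolding induced_is_2K2_def by auto
  qed
  also have "\<dots> \<longleftrightarrow> (\<forall>e \<in> {{A, C}, {A, D}, {B, C}, {B, D}}. e \<notin> E)"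
  proof -
    have split: "{x \<in> P \<union> Q. x \<in> E} \<subseteq> P \<longleftrightarrow> (\<forall>x \<in> Q. x \<notin> E)"
      if "P \<inter> Q = {}" for P Q :: "'a set set"
      using that by blast
    have "{{A, B}, {C, D}} \<inter> {{A, C}, {A, D}, {B, C}, {B, D}} = {}"
      using dist by (auto simp: doubleton_eq_iff)
    then show ?thesis unfolding induced_edges_four[OF g] by (rule split)
  qed
  also have "\<dots> \<longleftrightarrow> {A, C} \<notin> E \<and> {A, D} \<notin> E \<and> {B, C} \<notin> E \<and> {B, D} \<notin> E"
    by simp
  finally show ?thesis .
qed

lemma card2_subsets_four:
  assumes "distinct [A, B, C, D]"
  shows "{e. e \<subseteq> {A, B, C, D} \<and> card e = 2} = {{A, B}, {C, D}} \<union> {{A, C}, {A, D}, {B, C}, {B, D}}"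
proof (intro equalityI subsetI)
  fix e assume "e \<in> {e. e \<subseteq> {A, B, C, D} \<and> card e = 2}"
  then show "e \<in> {{A, B}, {C, D}} \<union> {{A, C}, {A, D}, {B, C}, {B, D}}"
    by (intro doubleton_subset_four) simp_all
next
  fix e assume "e \<in> {{A, B}, {C, D}} \<union> {{A, C}, {A, D}, {B, C}, {B, D}}"
  then show "e \<in> {e. e \<subseteq> {A, B, C, D} \<and> card e = 2}"
    by (elim UnE insertE emptyE) (use assms in simp_all)
qed

lemma induced_is_K4_iff:
  assumes g: "graph V E" and dist: "distinct [A, B, C, D]" and "{A, B} \<in> E" "{C, D} \<in> E"
  shows "induced_is_K4 E {A, B, C, D} \<longleftrightarrow>
           {A, C} \<in> E \<and> {A, D} \<in> E \<and> {B, C} \<in> E \<and> {B, D} \<in> E"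
proof -
  have split: "{x \<in> P \<union> Q. x \<in> E} = P \<union> Q \<longleftrightarrow> Q \<subseteq> E" if "P \<subseteq> E" for P Q :: "'a set set"
    using that by blast
  have "induced_is_K4 E {A, B, C, D} \<longleftrightarrow>
      {e \<in> {{A, B}, {C, D}} \<union> {{A, C}, {A, D}, {B, C}, {B, D}}. e \<in> E}
        = {{A, B}, {C, D}} \<union> {{A, C}, {A, D}, {B, C}, {B, D}}"
    using dist unfolding induced_is_K4_def induced_edges_four[OF g] card2_subsets_four[OF dist] by simp
  also have "\<dots> \<longleftrightarrow> {{A, C}, {A, D}, {B, C}, {B, D}} \<subseteq> E"
    by (rule split) (simp add: assms(3,4))
  finally show ?thesis by simp
qed

lemma proper_ordering_step:
  assumes "proper_ordering M X k u v" "1 \<le> n" "n < k"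
  shows "X (v (Suc n)) \<le> X (v n) \<and> (X (v n) = X (v (Suc n)) \<longrightarrow> X (u (Suc n)) \<le> X (u n))"
proof -
  have "n \<in> {1..<k}" using assms(2,3) by simp
  then show ?thesis using assms(1) unfolding proper_ordering_def by blast
qed

lemma proper_ordering_lex_mono:
  assumes po: "proper_ordering M X k u v" and "1 \<le> i" "i \<le> j" "j \<le> k"
  shows "X (v j) \<le> X (v i) \<and> (X (v j) = X (v i) \<longrightarrow> X (u j) \<le> X (u i))"
  using assms(3,4)
proof (induction j rule: dec_induct)
  case (step n)
  then have IH: "X (v n) \<le> X (v i)" "X (v n) = X (v i) \<longrightarrow> X (u n) \<le> X (u i)" by simp_all
  have "X (v (Suc n)) \<le> X (v n)" "X (v n) = X (v (Suc n)) \<longrightarrow> X (u (Suc n)) \<le> X (u n)"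
    using proper_ordering_step[OF po] step \<open>1 \<le> i\<close> by simp_all
  with IH show ?case by force
qed simp

lemma proper_ordering_pairs:
  assumes po: "proper_ordering M X k u v" and M: "matching E M" and g: "graph V E"
    and "1 \<le> i" "i < j" "j \<le> k"
  shows "distinct [v i, u i, v j, u j]" "{v i, u i} \<in> M" "{v j, u j} \<in> M"
    and "X (u i) \<le> X (v i)" "X (u j) \<le> X (v j)"
proof -
  \<comment> \<open>kept out of the simplifier: together these two equations make it loop\<close>
  have k: "k = card M" and "M = {{u l, v l} | l. l \<in> {1..k}}"
    using po unfolding proper_ordering_def by blast+
  then have M_eq: "M = (\<lambda>l. {u l, v l}) ` {1..k}" by blast
  have ij: "i \<in> {1..k}" "j \<in> {1..k}" using assms(4-6) by auto
  then have in_M: "{u i, v i} \<in> M" "{u j, v j} \<in> M" using M_eq by auto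
  have "card ((\<lambda>l. {u l, v l}) ` {1..k}) = card {1..k}"
    unfolding M_eq[symmetric] k[symmetric] by simp
  then have inj: "inj_on (\<lambda>l. {u l, v l}) {1..k}" by (rule eq_card_imp_inj_on[OF finite_atLeastAtMost])
  have "{u i, v i} \<noteq> {u j, v j}" using inj_on_eq_iff[OF inj ij] \<open>i < j\<close> by simp
  then have "{u i, v i} \<inter> {u j, v j} = {}" using matching_disjoint[OF M in_M] by blast
  moreover have "card {u i, v i} = 2" "card {u j, v j} = 2"
    using in_M M g unfolding matching_def graph_def by blast+
  then have "u i \<noteq> v i" "u j \<noteq> v j" by auto
  ultimately show "distinct [v i, u i, v j, u j]" by auto
  show "{v i, u i} \<in> M" "{v j, u j} \<in> M" using in_M by (simp_all add: insert_commute)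
  show "X (u i) \<le> X (v i)" "X (u j) \<le> X (v j)" using po ij unfolding proper_ordering_def by blast+
qed

section \<open>The extremal graph\<close>

locale extremal_configuration =
  fixes m \<beta> :: nat and V :: "'a set" and E :: "'a set set" and X :: "'a \<Rightarrow> real"
    and M :: "'a set set"
  assumes q_extremal: "q_extremal m \<beta> V E"
    and principal: "principal_eigvec V E X"
    and extremal: "extremal_matching E X M"
begin

lemma in_family: "in_family m \<beta> V E"
  using q_extremal unfolding q_extremal_def by blast

lemma graph: "graph V E"
  using in_family unfolding in_family_def by blast

lemma finite_E: "finite E"
  using graph_finite_edges[OF graph] .

lemma eigvec: "is_Q_eigvec V E (qQ V E) X"
  using principal unfolding principal_eigvec_def by blast

lemma eigen: "v \<in> V \<Longrightarrow> Qmul E X v = qQ V E * X v"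
  using eigvec unfolding is_Q_eigvec_def by blast

lemma nonneg: "v \<in> V \<Longrightarrow> X v \<ge> 0"
  using principal unfolding principal_eigvec_def by blast

lemma edge_sum_nonneg: "e \<subseteq> V \<Longrightarrow> edge_sum X e \<ge> 0"
  unfolding edge_sum_def using nonneg by (meson subsetD sum_nonneg)

lemma V_nonempty: "V \<noteq> {}"
  using eigvec unfolding is_Q_eigvec_def by blast

lemma Q_form_X: "Q_form E X = qQ V E"
  using Q_form_eigvec[OF graph eigvec] principal unfolding principal_eigvec_def sq_norm_def by simp

lemma family_Q_form_le:
  assumes "in_family m \<beta> V E'"
  shows "Q_form E' X \<le> qQ V E"
  using q_extremal_Q_form_le[OF q_extremal assms V_nonempty, of X] principal
  unfolding principal_eigvec_def sq_norm_def by simp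

lemma family_Q_form_eq_imp_eigen:
  assumes fam: "in_family m \<beta> V E'" and eq: "Q_form E' X = qQ V E" and "v \<in> V"
  shows "Qmul E' X v = qQ V E * X v"
proof (rule Rayleigh_maximiser_eigen[OF _ \<open>v \<in> V\<close>])
  show "graph V E'" using fam unfolding in_family_def by blast
  have "sq_norm V X = 1" using principal unfolding principal_eigvec_def sq_norm_def by simp
  then show "Q_form E' X = qQ V E * sq_norm V X" using eq by simp
qed (rule q_extremal_Q_form_le[OF q_extremal fam V_nonempty])

lemma matching_M: "matching E M" and card_M: "card M = matching_number E"
  using extremal unfolding extremal_matching_def maximum_matching_def by auto

lemma M_subset: "M \<subseteq> E"
  using matching_M unfolding matching_def by blast

lemma finite_M: "finite M"
  using M_subset finite_E finite_subset by blast

lemma card_M_ge: "\<beta> \<le> card M"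
  using card_M in_family unfolding in_family_def by simp

lemma matched_vertices_in_V:
  assumes "{A, B} \<in> M" "{C, D} \<in> M"
  shows "{A, B, C, D} \<subseteq> V"
  using graph_edge_subset[OF graph subsetD[OF M_subset assms(1)]]
    graph_edge_subset[OF graph subsetD[OF M_subset assms(2)]] by simp

lemma zero_along_edge:
  assumes zw: "{z, w} \<in> E" and "X z = 0"
  shows "X w = 0"
proof -
  obtain "z \<noteq> w" "z \<in> V" "w \<in> V" using graph_edge_subset[OF graph zw] graph_edgeE[OF graph zw]
    by (metis doubleton_eq_iff insert_subset)
  have "(\<Sum>e\<in>{e\<in>E. z \<in> e}. edge_sum X e) = 0"
    using eigen[OF \<open>z \<in> V\<close>] \<open>X z = 0\<close> unfolding Qmul_eq_sum_incident[OF graph] by simp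
  then have "edge_sum X {z, w} = 0"
    using finite_E zw edge_sum_nonneg graph_edge_subset[OF graph] by (subst (asm) sum_nonneg_eq_0_iff) auto
  then show ?thesis using \<open>z \<noteq> w\<close> \<open>X z = 0\<close> by simp
qed

text \<open>Moving an edge to a non-edge of at least the same weight keeps the graph in the family,
  hence attains q; comparing the eigen-equations at an endpoint of the new edge that is not on
  the old one shows that the new edge has weight 0.\<close>
lemma replace_edge_weight_zero:
  assumes e: "e \<in> E" and f: "f \<notin> E" "f \<subseteq> V" "card f = 2"
    and M': "matching (insert f (E - {e})) M'" "\<beta> \<le> card M'"
    and heavier: "edge_sum X e \<le> edge_sum X f"
  shows "edge_sum X f = 0"
proof -
  let ?E' = "insert f (E - {e})"
  have g': "graph V ?E'" using graph f unfolding graph_def by auto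
  have fam: "in_family m \<beta> V ?E'"
    using g' card_replace_edge[OF finite_E e f(1)] in_family
      card_le_matching_number[OF _ M'(1)] M'(2) finite_E
    unfolding in_family_def by fastforce
  have "(edge_sum X e)\<^sup>2 \<le> (edge_sum X f)\<^sup>2"
    using heavier edge_sum_nonneg graph_edge_subset[OF graph e] by (simp add: power_mono)
  then have "Q_form ?E' X = qQ V E"
    using Q_form_replace_edge[OF finite_E e f(1)] Q_form_X family_Q_form_le[OF fam] by simp
  then have eigen': "Qmul ?E' X w = qQ V E * X w" if "w \<in> V" for w
    using family_Q_form_eq_imp_eigen[OF fam] that by blast
  have "finite e" "card e = 2" using e graph unfolding graph_def by (auto intro: card_ge_0_finite)
  moreover have "f \<noteq> e" using e f(1) by blast
  ultimately have "\<not> f \<subseteq> e" using card_subset_eq f(3) by metis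
  then obtain w where w: "w \<in> f" "w \<notin> e" by blast
  then have "w \<in> V" using f(2) by blast
  have "qQ V E * X w = Qmul E X w + edge_sum X f"
    using eigen'[OF \<open>w \<in> V\<close>] Qmul_replace_edge[OF graph g' f(1) w] by simp
  then show ?thesis using eigen[OF \<open>w \<in> V\<close>] by simp
qed

lemma matching_M_replace_edge: "e \<notin> M \<Longrightarrow> matching (insert f (E - {e})) M"
  using M_subset by (intro matching_mono[OF matching_M]) auto

lemma non_matching_edge_pos:
  assumes e: "e \<in> E" "e \<notin> M"
  shows "edge_sum X e > 0"
proof (rule ccontr)
  obtain a b where ab: "a \<noteq> b" "e = {a, b}" using graph_edgeE[OF graph e(1)] .
  have V: "a \<in> V" "b \<in> V" using graph_edge_subset[OF graph e(1)] ab by auto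
  assume "\<not> edge_sum X e > 0"
  then have "X a = 0" using ab nonneg[OF V(1)] nonneg[OF V(2)] by simp
  obtain p where p: "p \<in> V" "X p \<noteq> 0" using eigvec unfolding is_Q_eigvec_def by blast
  then have "X p > 0" "a \<noteq> p" using nonneg \<open>X a = 0\<close> by force+
  have "{a, p} \<notin> E" using zero_along_edge \<open>X a = 0\<close> \<open>X p \<noteq> 0\<close> by blast
  moreover have "matching (insert {a, p} (E - {e})) M"
    by (rule matching_M_replace_edge[OF e(2)])
  ultimately have "edge_sum X {a, p} = 0"
    using replace_edge_weight_zero[OF e(1), of "{a, p}" M] card_M_ge V p \<open>a \<noteq> p\<close>
      \<open>X p > 0\<close> \<open>X a = 0\<close> \<open>\<not> edge_sum X e > 0\<close>
    by (simp add: ab)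
  then show False using \<open>a \<noteq> p\<close> \<open>X a = 0\<close> \<open>X p > 0\<close> by simp
qed

lemma non_edge_lighter:
  assumes e: "e \<in> E" "e \<notin> M" and f: "f \<notin> E" "f \<subseteq> V" "card f = 2"
  shows "edge_sum X f < edge_sum X e"
proof (rule ccontr)
  assume "\<not> edge_sum X f < edge_sum X e"
  moreover have "matching (insert f (E - {e})) M"
    by (rule matching_M_replace_edge[OF e(2)])
  ultimately have "edge_sum X f = 0"
    using replace_edge_weight_zero[OF e(1) f] card_M_ge by simp
  then show False using non_matching_edge_pos[OF e] \<open>\<not> edge_sum X f < edge_sum X e\<close> by simp
qed

lemma cross_edge_forces_opposite:
  assumes dist: "distinct [A, B, C, D]" and AB: "{A, B} \<in> M" and CD: "{C, D} \<in> M"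
    and "X C \<le> X B" and AC: "{A, C} \<in> E"
  shows "{B, D} \<in> E"
proof (rule ccontr)
  assume BD: "{B, D} \<notin> E"
  let ?M' = "rotate_edges M A B C D"
  have not_in_M: "{A, C} \<notin> M" "{B, D} \<notin> M"
    using matching_doubleton_not_in[OF matching_M AB] dist by auto
  have "?M' \<subseteq> insert {B, D} (E - {{C, D}})"
    using AC M_subset dist unfolding rotate_edges_def by (auto simp: doubleton_eq_iff)
  then have "matching (insert {B, D} (E - {{C, D}})) ?M'"
    using matching_rotate_edges[OF matching_M AB CD dist] by blast
  moreover have "\<beta> \<le> card ?M'"
    using card_rotate_edges[OF finite_M AB CD not_in_M dist] card_M_ge by simp
  moreover have V: "{A, B, C, D} \<subseteq> V" using matched_vertices_in_V[OF AB CD] .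
  ultimately have "X B + X D = 0"
    using replace_edge_weight_zero[of "{C, D}" "{B, D}"] CD M_subset BD dist \<open>X C \<le> X B\<close> by auto
  then have "X B = 0" using V nonneg by (simp add: add_nonneg_eq_0_iff)
  moreover have "{B, A} \<in> E" using AB M_subset by (metis insert_commute subsetD)
  ultimately have "X A = 0" "X C = 0"
    using zero_along_edge \<open>X C \<le> X B\<close> nonneg V by (blast, force)
  then show False using non_matching_edge_pos[OF AC not_in_M(1)] dist by simp
qed

lemma cross_edges_all_or_none:
  assumes dist: "distinct [A, B, C, D]" and AB: "{A, B} \<in> M" and CD: "{C, D} \<in> M"
    and "X B \<le> X A" "X D \<le> X C" "X C \<le> X B"
  shows "({A, C} \<in> E \<and> {A, D} \<in> E \<and> {B, C} \<in> E \<and> {B, D} \<in> E)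
    \<or> ({A, C} \<notin> E \<and> {A, D} \<notin> E \<and> {B, C} \<notin> E \<and> {B, D} \<notin> E)"
proof -
  have not_in_M: "{A, C} \<notin> M" "{A, D} \<notin> M" "{B, C} \<notin> M" "{B, D} \<notin> M"
    using matching_doubleton_not_in[OF matching_M AB] dist by auto
  have V: "{A, B, C, D} \<subseteq> V" using matched_vertices_in_V[OF AB CD] .
  have lighter: "edge_sum X f < edge_sum X e"
    if "e \<in> E" "e \<notin> M" "f \<notin> E" "f \<subseteq> {A, B, C, D}" "card f = 2" for e f
    using non_edge_lighter that V by blast
  show ?thesis
  proof (cases "{B, D} \<in> E")
    case True
    then show ?thesis
      using lighter[OF True not_in_M(4), of "{A, C}"] lighter[OF True not_in_M(4), of "{A, D}"]
        lighter[OF True not_in_M(4), of "{B, C}"] dist assms(4-6) by force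
  next
    case False
    then have "{A, C} \<notin> E" using cross_edge_forces_opposite[OF dist AB CD \<open>X C \<le> X B\<close>] by blast
    then show ?thesis
      using False lighter[OF _ not_in_M(2) \<open>{A, C} \<notin> E\<close>] lighter[OF _ not_in_M(3) \<open>{A, C} \<notin> E\<close>]
        dist assms(4-6) by force
  qed
qed

text \<open>Rotating \<open>AB, CD\<close> to \<open>AC, BD\<close> gains \<open>2 (x\<^sub>A - x\<^sub>D) (x\<^sub>C - x\<^sub>B)\<close>: in the graph if no
  cross edge is present, in the matching if all are.\<close>
lemma all_or_none_cross_edges_imp:
  assumes dist: "distinct [A, B, C, D]" and AB: "{A, B} \<in> M" and CD: "{C, D} \<in> M"
    and "X B \<le> X A" "X D \<le> X C" "X C \<le> X A" "X C = X A \<longrightarrow> X D \<le> X B"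
    and cross: "({A, C} \<in> E \<and> {A, D} \<in> E \<and> {B, C} \<in> E \<and> {B, D} \<in> E)
      \<or> ({A, C} \<notin> E \<and> {A, D} \<notin> E \<and> {B, C} \<notin> E \<and> {B, D} \<notin> E)"
  shows "X C \<le> X B"
proof (rule ccontr)
  assume "\<not> X C \<le> X B"
  then have gain: "2 * (X A - X D) * (X C - X B) > 0" using assms(4-7) by force
  have not_in_M: "{A, C} \<notin> M" "{B, D} \<notin> M"
    using matching_doubleton_not_in[OF matching_M AB] dist by auto
  have AB_E: "{A, B} \<in> E" and CD_E: "{C, D} \<in> E" using AB CD M_subset by auto
  from cross show False
  proof
    assume all: "{A, C} \<in> E \<and> {A, D} \<in> E \<and> {B, C} \<in> E \<and> {B, D} \<in> E"
    let ?M' = "rotate_edges M A B C D"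
    have "?M' \<subseteq> E" using all M_subset unfolding rotate_edges_def by auto
    then have "maximum_matching E ?M'"
      using matching_rotate_edges[OF matching_M AB CD dist] card_M
        card_rotate_edges[OF finite_M AB CD not_in_M dist]
      unfolding maximum_matching_def by simp
    then have "Q_form ?M' X \<le> Q_form M X"
      using extremal unfolding extremal_matching_def match_weight_eq_Q_form by blast
    then show False
      using Q_form_rotate_edges[OF finite_M AB CD not_in_M dist] gain by simp
  next
    assume none: "{A, C} \<notin> E \<and> {A, D} \<notin> E \<and> {B, C} \<notin> E \<and> {B, D} \<notin> E"
    let ?E' = "rotate_edges E A B C D"
    have "graph V ?E'" using graph_rotate_edges[OF graph matched_vertices_in_V[OF AB CD] dist] .
    moreover have "card ?E' = card E"
      using card_rotate_edges[OF finite_E AB_E CD_E _ _ dist] none by blast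
    moreover have "rotate_edges M A B C D \<subseteq> ?E'"
      using M_subset unfolding rotate_edges_def by auto
    then have "\<beta> \<le> matching_number ?E'"
      using matching_rotate_edges[OF matching_M AB CD dist] card_M_ge
        card_rotate_edges[OF finite_M AB CD not_in_M dist] graph_finite_edges[OF \<open>graph V ?E'\<close>]
        card_le_matching_number[of ?E' "rotate_edges M A B C D"] by simp
    ultimately have "Q_form ?E' X \<le> qQ V E"
      using family_Q_form_le in_family unfolding in_family_def by simp
    then show False
      using Q_form_rotate_edges[OF finite_E AB_E CD_E _ _ dist] none Q_form_X gain by simp
  qed
qed

end

theorem lemma2p3:
  fixes m \<beta> k i j :: nat and V :: "'a set" and E :: "'a set set"
    and X :: "'a \<Rightarrow> real" and M :: "'a set set" and u v :: "nat \<Rightarrow> 'a"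
  assumes "1 \<le> \<beta>" and "\<beta> \<le> m"
    and "q_extremal m \<beta> V E"
    and "principal_eigvec V E X"
    and "extremal_matching E X M"
    and "k = matching_number E"
    and "proper_ordering M X k u v"
    and "k \<ge> 2"
    and "1 \<le> i" and "i < j" and "j \<le> k"
  shows "X (u i) \<ge> X (v j) \<longleftrightarrow>
           (induced_is_2K2 E {u i, v i, u j, v j} \<or> induced_is_K4 E {u i, v i, u j, v j})"
proof -
  interpret extremal_configuration m \<beta> V E X M
    using assms(3-5) by unfold_locales
  note pairs = proper_ordering_pairs[OF assms(7) matching_M graph assms(9-11)]
  have lex: "X (v j) \<le> X (v i)" "X (v j) = X (v i) \<longrightarrow> X (u j) \<le> X (u i)"
    using proper_ordering_lex_mono[OF assms(7,9) _ assms(11)] assms(10) by auto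
  have edges: "{v i, u i} \<in> E" "{v j, u j} \<in> E" using pairs(2,3) M_subset by auto
  have "X (v j) \<le> X (u i) \<longleftrightarrow>
      ({v i, v j} \<in> E \<and> {v i, u j} \<in> E \<and> {u i, v j} \<in> E \<and> {u i, u j} \<in> E)
      \<or> ({v i, v j} \<notin> E \<and> {v i, u j} \<notin> E \<and> {u i, v j} \<notin> E \<and> {u i, u j} \<notin> E)"
    using cross_edges_all_or_none[OF pairs(1-5)] all_or_none_cross_edges_imp[OF pairs(1-5) lex]
    by blast
  moreover have "{u i, v i, u j, v j} = {v i, u i, v j, u j}" by auto
  ultimately show ?thesis
    using induced_is_2K2_iff[OF graph pairs(1) edges] induced_is_K4_iff[OF graph pairs(1) edges]
    by auto
qed

end
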